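(* Consider a graphical economy with resale (as in the context) satisfying Assumptions 2 and 3 stated in the context. Let $(\mathbf{x},\mathbf{y},\mathbf{p})$ be a $\mathbf{b}$-resale quasi-equilibrium, let $i\in[m]$ be a rational agent, and suppose there is a trade path between $i$ and an agent $j\in[m]$. Let $k\in[\ell]$. If either (i) $i$ is non-satiable in $k$, or (ii) $b_i>0$ and $p^i_k>0$, then $p^{\hat j}_k>0$ for all $\hat j\in P(i,j)$.
   Context: Setting. There are goods $[\ell]$ (divisible) and agents $[m]$ that are the nodes of an undirected graph $G=([m],E)$. Write $i\simeq j$ if $i=j$ or $\{i,j\}\in E$, and $i\sim j$ if $i\simeq j$ and $i\ne j$. Agent $i$ has an endowment $\mathbf{e}^i\in\mathbb{R}^\ell_+$, a utility $u_i:\mathbb{R}^\ell_+\to\mathbb{R}_+$, and a resale bound $b_i\ge0$; $\mathbf{b}=(b_i)_i$. Local price vectors $\mathbf{p}^i\in\mathbb{R}^\ell_+$; consumption plans $\mathbf{x}^{ij}$ and resale plans $\mathbf{y}^{ij}$ in $\mathbb{R}^\ell_+$ (what $i$ buys from $j$ to consume / to resell), zero unless $j\simeq i$. A demand system $D:\mathbb{R}_+^{m\times\ell}\times\mathbb{R}_+\to2^{\mathbb{R}_+^{m\times\ell}}$ is normalized if $D(\mathbf{p},0)=\{\mathbf{0}\}$. $C_i(\mathbf{p},\beta)$ = plans $\mathbf{x}^i$ maximizing $u_i(\sum_{j\simeq i}\mathbf{x}^{ij})$ subject to $\sum_{j\simeq i}\mathbf{p}^j\cdot\mathbf{x}^{ij}\le\beta$.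 $R_i(\mathbf{p},b_i)$ = resale plans maximizing $\sum_{j\simeq i}(\mathbf{p}^i-\mathbf{p}^j)\cdot\mathbf{y}^{ij}$ over a feasible set $\mathcal{Y}_i(\mathbf{p},b_i)$. Wealth $\beta_i=\mathbf{p}^i\cdot\mathbf{e}^i+\sum_{j\simeq i}(\mathbf{p}^i-\mathbf{p}^j)\cdot\mathbf{y}^{ij}$. Agent $i$ is rational if $\mathbf{y}^i\in R_i(\mathbf{p},b_i)$ and $\mathbf{x}^i\in C_i(\mathbf{p},\beta_i)$. A $\mathbf{b}$-resale quasi-equilibrium is a triple with $\sum_{i,k}p^i_k=1$, local clearing $\sum_{j\simeq i}\mathbf{x}^{ji}+\sum_{j\simeq i}\mathbf{y}^{ji}=\mathbf{e}^i+\sum_{j\simeq i}\mathbf{y}^{ij}$ and $\mathbf{y}^i\in R_i(\mathbf{p},b_i)$ for all $i$, $\mathbf{x}^i\in C_i(\mathbf{p},\beta_i)$ whenever $\beta_i>0$, and $\sum_{j\simeq i}\mathbf{p}^j\cdot\mathbf{x}^{ij}\le\beta_i$ whenever $\beta_i=0$. Agent $i$ is non-satiable in $k$ if $u_i$ is strictly monotone increasing in coordinate $k$. A trade path between $i$ and $j$ is a path in $G$ from $i$ to $j$ all of whose nodes other than $i,j$ have positive resale bound; $P(i,j)$ is the set of agents on some trade path between $i$ and $j$, including $i$ and $j$. Assumption 2: each $R_i$ is normalized with closed convex feasible set $\mathcal{Y}_i(\mathbf{p},b_i)$, and for each $i$ with $b_i>0$: (i) if some $j\sim i$, $k$ have $0<p^j_k<p^i_k$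 then $\|\mathbf{y}^i\|_1>0$ for all $\mathbf{y}^i\in R_i(\mathbf{p},b_i)$; (ii) if some $j\sim i$, $k$ have $0=p^j_k<p^i_k$ then $R_i(\mathbf{p},b_i)=\emptyset$. Assumption 3: for every agent $i$, $b_i>0$ or all coordinates of $\mathbf{e}^i$ are strictly positive. *)

theory Defs
  imports "HOL-Analysis.Analysis"
begin

text \<open>Agents are the elements of a finite type 'a (the set [m]), goods the elements
of a finite type 'g (the set [l]).\<close>

definition graph :: "('a \<Rightarrow> 'a \<Rightarrow> bool) \<Rightarrow> bool" where
  "graph E \<longleftrightarrow> (\<forall>i j. E i j \<longrightarrow> E j i) \<and> (\<forall>i. \<not> E i i)"

definition adj :: "('a \<Rightarrow> 'a \<Rightarrow> bool) \<Rightarrow> 'a \<Rightarrow> 'a \<Rightarrow> bool" where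
  "adj E i j \<longleftrightarrow> i = j \<or> E i j"

definition nonneg_vec :: "real^'g \<Rightarrow> bool" where
  "nonneg_vec z \<longleftrightarrow> (\<forall>k. z $ k \<ge> 0)"

definition nonneg_prices :: "real^'g^'a \<Rightarrow> bool" where
  "nonneg_prices p \<longleftrightarrow> (\<forall>i k. p $ i $ k \<ge> 0)"

definition plan :: "('a \<Rightarrow> 'a \<Rightarrow> bool) \<Rightarrow> 'a \<Rightarrow> real^'g^'a \<Rightarrow> bool" where
  "plan E i z \<longleftrightarrow> (\<forall>j k. z $ j $ k \<ge> 0) \<and> (\<forall>j. \<not> adj E i j \<longrightarrow> z $ j = 0)"

definition profit :: "('a \<Rightarrow> 'a \<Rightarrow> bool) \<Rightarrow> real^'g^'a \<Rightarrow> 'a \<Rightarrow> real^'g^'a \<Rightarrow> real" where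
  "profit E p i y = (\<Sum>j\<in>{j. adj E i j}. (p $ i - p $ j) \<bullet> y $ j)"

definition cost :: "('a \<Rightarrow> 'a \<Rightarrow> bool) \<Rightarrow> real^'g^'a \<Rightarrow> 'a \<Rightarrow> real^'g^'a \<Rightarrow> real" where
  "cost E p i x = (\<Sum>j\<in>{j. adj E i j}. p $ j \<bullet> x $ j)"

definition R_of :: "('a \<Rightarrow> 'a \<Rightarrow> bool) \<Rightarrow> ('a \<Rightarrow> real^'g^'a \<Rightarrow> real \<Rightarrow> (real^'g^'a) set)
    \<Rightarrow> real^'g^'a \<Rightarrow> 'a \<Rightarrow> real \<Rightarrow> (real^'g^'a) set" where
  "R_of E Y p i \<beta> = {y. y \<in> Y i p \<beta> \<and> plan E i y \<and>
      (\<forall>y'. y' \<in> Y i p \<beta> \<and> plan E i y' \<longrightarrow> profit E p i y' \<le> profit E p i y)}"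

definition C_of :: "('a \<Rightarrow> 'a \<Rightarrow> bool) \<Rightarrow> ('a \<Rightarrow> real^'g \<Rightarrow> real)
    \<Rightarrow> real^'g^'a \<Rightarrow> 'a \<Rightarrow> real \<Rightarrow> (real^'g^'a) set" where
  "C_of E u p i \<beta> = {x. plan E i x \<and> cost E p i x \<le> \<beta> \<and>
      (\<forall>x'. plan E i x' \<and> cost E p i x' \<le> \<beta> \<longrightarrow>
         u i (\<Sum>j\<in>{j. adj E i j}. x' $ j) \<le> u i (\<Sum>j\<in>{j. adj E i j}. x $ j))}"

definition wealth :: "('a \<Rightarrow> 'a \<Rightarrow> bool) \<Rightarrow> real^'g^'a \<Rightarrow> real^'g^'a \<Rightarrow> 'a \<Rightarrow> real^'g^'a \<Rightarrow> real" where
  "wealth E e p i y = p $ i \<bullet> e $ i + profit E p i y"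

definition rational_agent where
  "rational_agent E u Y e b (x :: real^'g^'a^'a) (y :: real^'g^'a^'a) p i \<longleftrightarrow>
     y $ i \<in> R_of E Y p i (b i) \<and> x $ i \<in> C_of E u p i (wealth E e p i (y $ i))"

definition resale_quasi_eq where
  "resale_quasi_eq E u Y e b (x :: real^'g^'a^'a) (y :: real^'g^'a^'a) p \<longleftrightarrow>
     nonneg_prices p \<and> (\<Sum>i\<in>UNIV. \<Sum>k\<in>UNIV. p $ i $ k) = 1 \<and>
     (\<forall>i. plan E i (x $ i)) \<and>
     (\<forall>i. (\<Sum>j\<in>{j. adj E i j}. x $ j $ i) + (\<Sum>j\<in>{j. adj E i j}. y $ j $ i)
            = e $ i + (\<Sum>j\<in>{j. adj E i j}. y $ i $ j)) \<and>
     (\<forall>i. y $ i \<in> R_of E Y p i (b i)) \<and>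
     (\<forall>i. wealth E e p i (y $ i) > 0 \<longrightarrow> x $ i \<in> C_of E u p i (wealth E e p i (y $ i))) \<and>
     (\<forall>i. wealth E e p i (y $ i) = 0 \<longrightarrow> cost E p i (x $ i) \<le> wealth E e p i (y $ i))"

definition nonsatiable :: "('a \<Rightarrow> real^'g \<Rightarrow> real) \<Rightarrow> 'a \<Rightarrow> 'g \<Rightarrow> bool" where
  "nonsatiable u i k \<longleftrightarrow>
     (\<forall>z t. nonneg_vec z \<and> t > 0 \<longrightarrow> u i z < u i (z + axis k t))"

definition assumption2 where
  "assumption2 E (Y :: 'a \<Rightarrow> real^'g^'a \<Rightarrow> real \<Rightarrow> (real^'g^'a) set) b \<longleftrightarrow>
     (\<forall>i p. nonneg_prices p \<longrightarrow> R_of E Y p i 0 = {0}) \<and>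
     (\<forall>i p. nonneg_prices p \<longrightarrow> closed (Y i p (b i)) \<and> convex (Y i p (b i))) \<and>
     (\<forall>i. b i > 0 \<longrightarrow> (\<forall>p. nonneg_prices p \<longrightarrow>
        ((\<exists>j k. E i j \<and> 0 < p $ j $ k \<and> p $ j $ k < p $ i $ k) \<longrightarrow>
            (\<forall>yi \<in> R_of E Y p i (b i). (\<Sum>j\<in>UNIV. \<Sum>k\<in>UNIV. \<bar>yi $ j $ k\<bar>) > 0)) \<and>
        ((\<exists>j k. E i j \<and> 0 = p $ j $ k \<and> p $ j $ k < p $ i $ k) \<longrightarrow>
            R_of E Y p i (b i) = {})))"

definition assumption3 :: "real^'g^'a \<Rightarrow> ('a \<Rightarrow> real) \<Rightarrow> bool" where
  "assumption3 e b \<longleftrightarrow> (\<forall>i. b i > 0 \<or> (\<forall>k. e $ i $ k > 0))"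

definition trade_path :: "('a \<Rightarrow> 'a \<Rightarrow> bool) \<Rightarrow> ('a \<Rightarrow> real) \<Rightarrow> 'a \<Rightarrow> 'a \<Rightarrow> 'a list \<Rightarrow> bool" where
  "trade_path E b i j ps \<longleftrightarrow> ps \<noteq> [] \<and> hd ps = i \<and> last ps = j \<and> distinct ps \<and>
     (\<forall>n. Suc n < length ps \<longrightarrow> E (ps ! n) (ps ! Suc n)) \<and>
     (\<forall>n. 0 < n \<and> Suc n < length ps \<longrightarrow> b (ps ! n) > 0)"

definition P_set :: "('a \<Rightarrow> 'a \<Rightarrow> bool) \<Rightarrow> ('a \<Rightarrow> real) \<Rightarrow> 'a \<Rightarrow> 'a \<Rightarrow> 'a set" where
  "P_set E b i j = {v. \<exists>ps. trade_path E b i j ps \<and> v \<in> set ps}"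

end

theory Submission
  imports Defs
begin

text \<open>If good k were free at a neighbour of a non-satiable agent i, adding one unit of it to
an optimal consumption plan would cost nothing and strictly raise utility; so every neighbour
of i charges a positive price.  If an agent v with positive resale bound charges a positive
price for k while a neighbour gives it away, Assumption 2(ii) leaves v without an optimal
resale plan, contradicting equilibrium; so positivity spreads along the inner nodes of every
trade path.\<close>

lemma sum_adj_axis:
  fixes v :: "'b::comm_monoid_add"
  assumes "adj E i w"
  shows "(\<Sum>j\<in>{j. adj E i j}. axis w v $ j) = v"
  using assms by (simp add: axis_def if_distrib sum.delta cong: if_cong)

lemma cost_add_axis:
  assumes "adj E i w"
  shows "cost E p i (x + axis w v) = cost E p i x + p $ w \<bullet> v"
proof -
  have "(\<Sum>j\<in>{j. adj E i j}. p $ j \<bullet> axis w v $ j) = p $ w \<bullet> v"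
    using assms by (simp add: axis_def if_distrib sum.delta cong: if_cong)
  then show ?thesis
    unfolding cost_def by (simp add: inner_add_right sum.distrib)
qed

lemma plan_add_axis:
  assumes "plan E i x" and "adj E i w" and "nonneg_vec v"
  shows "plan E i (x + axis w v)"
  using assms unfolding plan_def nonneg_vec_def by (auto simp: axis_def)

lemma nonneg_vec_bundle:
  assumes "plan E i x"
  shows "nonneg_vec (\<Sum>j\<in>{j. adj E i j}. x $ j)"
  using assms unfolding nonneg_vec_def plan_def by (auto simp: sum_component intro: sum_nonneg)

lemma demand_nonsatiable_price_pos:
  fixes u :: "'a::finite \<Rightarrow> real^'g::finite \<Rightarrow> real"
  assumes "nonneg_prices p"
    and demand: "x \<in> C_of E u p i \<beta>"
    and "nonsatiable u i k"
    and "adj E i w"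
  shows "p $ w $ k > 0"
proof (rule ccontr)
  assume "\<not> p $ w $ k > 0"
  with \<open>nonneg_prices p\<close> have free: "p $ w $ k = 0"
    unfolding nonneg_prices_def by (metis less_eq_real_def)
  define x' where "x' = x + axis w (axis k 1)"
  have plan: "plan E i x" and budget: "cost E p i x \<le> \<beta>"
    and optimal: "\<And>z. plan E i z \<Longrightarrow> cost E p i z \<le> \<beta> \<Longrightarrow>
       u i (\<Sum>j\<in>{j. adj E i j}. z $ j) \<le> u i (\<Sum>j\<in>{j. adj E i j}. x $ j)"
    using demand unfolding C_of_def by auto
  have "plan E i x'"
    unfolding x'_def using plan \<open>adj E i w\<close>
    by (intro plan_add_axis) (auto simp: nonneg_vec_def axis_def)
  moreover have "cost E p i x' \<le> \<beta>"
    unfolding x'_def using budget free \<open>adj E i w\<close> by (simp add: cost_add_axis inner_axis)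
  moreover have "u i (\<Sum>j\<in>{j. adj E i j}. x $ j) < u i (\<Sum>j\<in>{j. adj E i j}. x' $ j)"
    using \<open>nonsatiable u i k\<close> nonneg_vec_bundle[OF plan] \<open>adj E i w\<close>
    unfolding nonsatiable_def x'_def by (simp add: sum.distrib sum_adj_axis)
  ultimately show False
    using optimal by fastforce
qed

lemma resale_price_pos_propagates:
  assumes "assumption2 E Y b" and "nonneg_prices p"
    and "R_of E Y p v (b v) \<noteq> {}"
    and "b v > 0" and "E v w" and "p $ v $ k > 0"
  shows "p $ w $ k > 0"
proof (rule ccontr)
  assume "\<not> p $ w $ k > 0"
  with \<open>nonneg_prices p\<close> have "p $ w $ k = 0"
    unfolding nonneg_prices_def by (metis less_eq_real_def)
  then have "R_of E Y p v (b v) = {}"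
    using assms(1,2,4-6) unfolding assumption2_def by metis
  with assms(3) show False by contradiction
qed

lemma nth_forward_induct:
  assumes "P (xs ! 0)"
    and "\<And>n. Suc n < length xs \<Longrightarrow> P (xs ! n) \<Longrightarrow> P (xs ! Suc n)"
    and "v \<in> set xs"
  shows "P v"
proof -
  have "n < length xs \<Longrightarrow> P (xs ! n)" for n
    by (induction n) (use assms(1,2) in auto)
  with \<open>v \<in> set xs\<close> show ?thesis
    by (auto simp: in_set_conv_nth)
qed

lemma P_set_subset:
  assumes "i \<in> S"
    and "\<And>w. E i w \<Longrightarrow> w \<in> S"
    and "\<And>v w. b v > 0 \<Longrightarrow> E v w \<Longrightarrow> v \<in> S \<Longrightarrow> w \<in> S"
  shows "P_set E b i j \<subseteq> S"
proof
  fix v assume "v \<in> P_set E b i j"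
  then obtain ps where path: "trade_path E b i j ps" and "v \<in> set ps"
    unfolding P_set_def by auto
  have first: "ps ! 0 = i"
    using path unfolding trade_path_def by (metis hd_conv_nth)
  show "v \<in> S"
  proof (rule nth_forward_induct[where P = "\<lambda>v. v \<in> S", OF _ _ \<open>v \<in> set ps\<close>])
    show "ps ! 0 \<in> S"
      using first assms(1) by simp
  next
    fix n assume "Suc n < length ps" and "ps ! n \<in> S"
    then have edge: "E (ps ! n) (ps ! Suc n)"
      using path unfolding trade_path_def by auto
    show "ps ! Suc n \<in> S"
    proof (cases "n = 0")
      case True
      then show ?thesis using edge first assms(2) by simp
    next
      case False
      then have "b (ps ! n) > 0"
        using path \<open>Suc n < length ps\<close> unfolding trade_path_def by auto
      then show ?thesis using edge \<open>ps ! n \<in> S\<close> assms(3) by blast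
    qed
  qed
qed

theorem lemmaA1:
  fixes E :: "'a::finite \<Rightarrow> 'a \<Rightarrow> bool"
    and u :: "'a \<Rightarrow> real^'g::finite \<Rightarrow> real"
    and Y :: "'a \<Rightarrow> real^'g^'a \<Rightarrow> real \<Rightarrow> (real^'g^'a) set"
    and e :: "real^'g^'a"
    and b :: "'a \<Rightarrow> real"
    and x y :: "real^'g^'a^'a"
    and p :: "real^'g^'a"
    and i j :: 'a and k :: 'g
  assumes "graph E"
    and "\<forall>i'. b i' \<ge> 0"
    and "\<forall>i' k'. e $ i' $ k' \<ge> 0"
    and "\<forall>i' z. nonneg_vec z \<longrightarrow> u i' z \<ge> 0"
    and "assumption2 E Y b"
    and "assumption3 e b"
    and "resale_quasi_eq E u Y e b x y p"
    and "rational_agent E u Y e b x y p i"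
    and "\<exists>ps. trade_path E b i j ps"
    and "nonsatiable u i k \<or> (b i > 0 \<and> p $ i $ k > 0)"
  shows "\<forall>jh \<in> P_set E b i j. p $ jh $ k > 0"
proof -
  have prices: "nonneg_prices p" and resale: "\<And>v. y $ v \<in> R_of E Y p v (b v)"
    using assms(7) unfolding resale_quasi_eq_def by auto
  have demand: "x $ i \<in> C_of E u p i (wealth E e p i (y $ i))"
    using assms(8) unfolding rational_agent_def by auto
  have propagates: "\<And>v w. b v > 0 \<Longrightarrow> E v w \<Longrightarrow> p $ v $ k > 0 \<Longrightarrow> p $ w $ k > 0"
    using resale_price_pos_propagates[OF assms(5) prices] resale by blast
  have "p $ i $ k > 0 \<and> (\<forall>w. E i w \<longrightarrow> p $ w $ k > 0)"
    using assms(10)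
  proof
    assume "nonsatiable u i k"
    then show ?thesis
      using demand_nonsatiable_price_pos[OF prices demand] by (simp add: adj_def)
  qed (use propagates in blast)
  then have "P_set E b i j \<subseteq> {v. p $ v $ k > 0}"
    by (intro P_set_subset) (auto intro: propagates)
  then show ?thesis by blast
qed

end
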